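(* Let $\Omega\subset\mathbb{R}^2$ be a bounded domain, $T>0$, $a,b,m>0$ with $b>a$, and let $(v,u)$ be a sufficiently regular solution of $\Delta v=u_{x_1}$ and $u_t-\operatorname{div}(D\nabla u)=-\nabla u\cdot\mathbf{q}$ in $\Omega_T=\Omega\times(0,T)$, $D\nabla u\cdot\nu=0$ and $v=0$ on $\partial\Omega\times(0,T)$, $u(x,0)=u_0(x)$ on $\Omega$. Assume $u_0\in L^2(\Omega)$. Then $$\frac12\sup_{0\le t\le T}\int_\Omega u^2\,dx+\int_0^T\!\!\int_\Omega D\nabla u\cdot\nabla u\,dx\,dt\le\int_\Omega u_0^2\,dx.$$
   Context: $\nu$ is the unit outward normal, $\mathbf{q}=(-v_{x_2},v_{x_1})^T$, $D=(a|\mathbf{q}|+m)I+(b-a)\frac{\mathbf{q}\mathbf{q}^T}{|\mathbf{q}|}$ with $\frac{\mathbf{q}\mathbf{q}^T}{|\mathbf{q}|}=0$ when $\mathbf{q}=0$. "Sufficiently regular" means regular enough that the relevant integrations by parts are legitimate. *)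

theory Defs
  imports "HOL-Analysis.Analysis"
begin

text \<open>q = (-v_{x2}, v_{x1}) computed from the spatial gradient g of v.\<close>
definition qvec :: "real^2 \<Rightarrow> real^2" where
  "qvec g = (\<chi> i. if i = 1 then - (g $ 2) else g $ 1)"

definition Dmat :: "real \<Rightarrow> real \<Rightarrow> real \<Rightarrow> real^2 \<Rightarrow> real^2^2" where
  "Dmat a b m q = (a * norm q + m) *\<^sub>R mat 1
     + (if q = 0 then 0 else ((b - a) / norm q) *\<^sub>R (\<chi> i j. q $ i * q $ j))"

definition C1_field :: "(real^2) set \<Rightarrow> (real^2 \<Rightarrow> real^2) \<Rightarrow> (real^2 \<Rightarrow> real^2^2) \<Rightarrow> bool" where
  "C1_field U F J \<longleftrightarrow> (\<forall>x\<in>U. (F has_derivative (\<lambda>h. J x *v h)) (at x)) \<and> continuous_on U J"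

text \<open>Regularity of the domain: nu is a unit (outward) normal on the boundary and sigma
  a finite boundary measure such that the divergence (Gauss-Green) theorem holds for
  every C^1 vector field defined on a neighbourhood of the closure.\<close>
definition divergence_domain :: "(real^2) set \<Rightarrow> (real^2 \<Rightarrow> real^2) \<Rightarrow> (real^2) measure \<Rightarrow> bool" where
  "divergence_domain \<Omega> \<nu> \<sigma> \<longleftrightarrow>
     space \<sigma> = frontier \<Omega> \<and> sets \<sigma> = sets (restrict_space lborel (frontier \<Omega>)) \<and>
     finite_measure \<sigma> \<and> \<nu> \<in> borel_measurable \<sigma> \<and> (\<forall>x\<in>frontier \<Omega>. norm (\<nu> x) = 1) \<and>
     (\<forall>U F J. open U \<and> closure \<Omega> \<subseteq> U \<and> C1_field U F J \<longrightarrow>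
        integral \<Omega> (\<lambda>x. trace (J x)) = (\<integral>x. F x \<bullet> \<nu> x \<partial>\<sigma>))"

end

theory Submission
  imports Defs
begin

(* Energy method. Let e(t) = \<integral> u(t)^2 and g(t) = \<integral> D \<nabla>u \<bullet> \<nabla>u, which is nonnegative because
   D is positive semidefinite. Differentiating under the integral sign and inserting the
   equation for u gives e' = 2 \<integral> u div(D \<nabla>u) - 2 \<integral> u \<nabla>u \<bullet> q. The divergence theorem turns the
   first term into -2 g, since D \<nabla>u \<bullet> \<nu> = 0 on the boundary. The second term vanishes: with
   R the rotation by a right angle, so that q = R \<nabla>v, the field v R(u \<nabla>u) has divergence
   -u \<nabla>u \<bullet> q (the Hessian of u is symmetric, so R(u \<nabla>u) is divergence free) and normal
   component 0 because v = 0 on the boundary. Thus e' = -2 g \<le> 0: e decreases, the L^2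
   convergence u(t) \<rightarrow> u0 bounds it by \<integral> u0^2, and integrating e' = -2 g over (0,T) bounds
   \<integral>\<integral> g by \<integral> u0^2 / 2. *)

section \<open>Integrals over bounded sets and with parameters\<close>

lemma continuous_on_compact_imp_integrable_on:
  fixes f :: "'a::euclidean_space \<Rightarrow> real"
  assumes K: "compact K" "S \<subseteq> K" and S: "S \<in> lmeasurable" and f: "continuous_on K f"
  shows "f integrable_on S"
proof -
  obtain B where B: "\<And>x. x \<in> K \<Longrightarrow> norm (f x) \<le> B"
    using compact_imp_bounded[OF compact_continuous_image[OF f K(1)]]
    by (auto simp: bounded_iff)
  show ?thesis
  proof (rule measurable_bounded_by_integrable_imp_integrable)
    show "f \<in> borel_measurable (lebesgue_on S)"
      by (rule continuous_imp_measurable_on_sets_lebesgue)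
         (use continuous_on_subset[OF f K(2)] S in auto)
    show "(\<lambda>_. B) integrable_on S" using S by (rule integrable_on_const)
    show "\<And>x. x \<in> S \<Longrightarrow> norm (f x) \<le> B" using B K(2) by blast
    show "S \<in> sets lebesgue" using S by auto
  qed
qed

lemma continuous_on_closure_imp_integrable_on:
  fixes f :: "'a::euclidean_space \<Rightarrow> real"
  assumes "open S" "bounded S" "continuous_on (closure S) f"
  shows "f integrable_on S"
  using assms by (intro continuous_on_compact_imp_integrable_on[of "closure S"])
    (auto simp: compact_closure closure_subset lmeasurable_open)

lemma norm_integral_le_measure:
  fixes f :: "'a::euclidean_space \<Rightarrow> real"
  assumes S: "S \<in> lmeasurable" and f: "f integrable_on S" and B: "\<And>x. x \<in> S \<Longrightarrow> norm (f x) \<le> B"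
  shows "norm (integral S f) \<le> B * measure lebesgue S"
proof -
  have "norm (integral S f) \<le> integral S (\<lambda>x. B)"
    using integral_norm_bound_integral[OF f integrable_on_const[OF S]] B by blast
  also have "\<dots> = integral S (\<lambda>x. B * 1)" by simp
  also have "\<dots> = B * measure lebesgue S"
    by (simp only: integral_mult_right lmeasure_integral[OF S])
  finally show ?thesis .
qed

lemma nn_set_integral_eq_integral:
  fixes f :: "'a::euclidean_space \<Rightarrow> real"
  assumes "f integrable_on S" "\<And>x. x \<in> S \<Longrightarrow> 0 \<le> f x"
  shows "(\<integral>\<^sup>+x\<in>S. ennreal (f x) \<partial>lborel) = ennreal (integral S f)"
  using assms by (intro nn_integral_has_integral_lebesgue' integrable_integral)

lemma integral_continuous_on_param_lmeasurable:
  fixes f :: "'a::metric_space \<Rightarrow> 'b::euclidean_space \<Rightarrow> real"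
  assumes K: "compact K" "S \<subseteq> K" and S: "S \<in> lmeasurable"
    and cont_f: "continuous_on (X \<times> K) (\<lambda>(x, t). f x t)"
  shows "continuous_on X (\<lambda>x. integral S (f x))"
  unfolding continuous_on_def
proof (intro ballI tendstoI)
  fix x0 and e :: real
  assume x0: "x0 \<in> X" and e: "e > 0"
  note [continuous_intros] = continuous_on_compose2[OF cont_f, where f="\<lambda>t. (x, t)" for x,
      unfolded split_beta fst_conv snd_conv]
  have int: "f x integrable_on S" if "x \<in> X" for x
    using that by (intro continuous_on_compact_imp_integrable_on[OF K S] continuous_intros) auto
  define d where "d = e / (measure lebesgue S + 1)"
  have "0 < measure lebesgue S + 1" by (simp add: add_nonneg_pos)
  then have d: "d > 0" "d * measure lebesgue S < e"
    using e by (simp_all add: d_def divide_less_eq)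
  obtain X0 where X0: "x0 \<in> X0" "open X0"
    and bound: "\<And>x t. x \<in> X0 \<inter> X \<Longrightarrow> t \<in> K \<Longrightarrow> dist (f x t) (f x0 t) \<le> d"
    using continuous_on_prod_compactE[OF cont_f K(1) x0 d(1)]
    unfolding split_beta fst_conv snd_conv by metis
  have "\<forall>\<^sub>F x in at x0 within X. x \<in> X0"
    using X0 eventually_at_topological by blast
  moreover have "\<forall>\<^sub>F x in at x0 within X. x \<in> X"
    by (simp add: eventually_at_filter)
  ultimately show "\<forall>\<^sub>F x in at x0 within X. dist (integral S (f x)) (integral S (f x0)) < e"
  proof eventually_elim
    case (elim x)
    have "dist (integral S (f x)) (integral S (f x0)) = norm (integral S (\<lambda>t. f x t - f x0 t))"
      using elim x0 by (simp add: dist_norm integral_diff int)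
    also have "\<dots> \<le> d * measure lebesgue S"
      using elim x0 K bound
      by (intro norm_integral_le_measure[OF S] integrable_diff int) (auto simp: dist_norm)
    finally show ?case using d by linarith
  qed
qed

lemma has_real_derivative_linearization_bound:
  fixes f f' :: "real \<Rightarrow> real"
  assumes "\<And>y. y \<in> closed_segment a b \<Longrightarrow> (f has_real_derivative f' y) (at y)"
    and "\<And>y. y \<in> closed_segment a b \<Longrightarrow> \<bar>f' y - f' a\<bar> \<le> B"
  shows "\<bar>f b - f a - (b - a) * f' a\<bar> \<le> \<bar>b - a\<bar> * B"
proof -
  have "norm (f b - f a - (b - a) *\<^sub>R f' a) \<le> norm (b - a) * B"
  proof (rule vector_differentiable_bound_linearization[where S="closed_segment a b" and f=f
        and f'=f'])
    show "(f has_vector_derivative f' y) (at y within closed_segment a b)"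
      if "y \<in> closed_segment a b" for y
      using assms(1)[OF that]
      by (auto intro: has_field_derivative_at_within
          simp: has_real_derivative_iff_has_vector_derivative[symmetric])
  qed (use assms(2) in auto)
  then show ?thesis by simp
qed

lemma leibniz_rule_lmeasurable:
  fixes f fx :: "real \<Rightarrow> 'b::euclidean_space \<Rightarrow> real"
  assumes K: "compact K" "S \<subseteq> K" and S: "S \<in> lmeasurable"
    and X: "open X" "x0 \<in> X"
    and fx: "\<And>x t. x \<in> X \<Longrightarrow> t \<in> K \<Longrightarrow> ((\<lambda>x. f x t) has_real_derivative fx x t) (at x)"
    and int_f: "\<And>x. x \<in> X \<Longrightarrow> f x integrable_on S"
    and cont_fx: "continuous_on (X \<times> K) (\<lambda>(x, t). fx x t)"
  shows "((\<lambda>x. integral S (f x)) has_real_derivative integral S (fx x0)) (at x0)"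
  unfolding has_field_derivative_iff
proof (rule tendstoI)
  fix e :: real assume e: "e > 0"
  note [continuous_intros] = continuous_on_compose2[OF cont_fx, where f="\<lambda>t. (x, t)" for x,
      unfolded split_beta fst_conv snd_conv]
  have int_fx: "fx x0 integrable_on S"
    using X by (intro continuous_on_compact_imp_integrable_on[OF K S] continuous_intros) auto
  define d where "d = e / (measure lebesgue S + 1)"
  have "0 < measure lebesgue S + 1" by (simp add: add_nonneg_pos)
  then have d: "d > 0" "d * measure lebesgue S < e"
    using e by (simp_all add: d_def divide_less_eq)
  obtain X0 where X0: "x0 \<in> X0" "open X0"
    and bound: "\<And>x t. x \<in> X0 \<inter> X \<Longrightarrow> t \<in> K \<Longrightarrow> dist (fx x t) (fx x0 t) \<le> d"
    using continuous_on_prod_compactE[OF cont_fx K(1) X(2) d(1)]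
    unfolding split_beta fst_conv snd_conv by metis
  have "\<forall>\<^sub>F x in at x0. closed_segment x0 x \<subseteq> X0 \<inter> X"
    using eventually_closed_segment[of "X0 \<inter> X" x0 UNIV] X X0 by auto
  moreover have "\<forall>\<^sub>F x in at x0. x \<noteq> x0"
    by (simp add: eventually_at_filter)
  ultimately show "\<forall>\<^sub>F x in at x0.
      dist ((integral S (f x) - integral S (f x0)) / (x - x0)) (integral S (fx x0)) < e"
  proof eventually_elim
    case (elim x)
    have xX: "x \<in> X" using elim by auto
    have linearization: "\<bar>f x t - f x0 t - (x - x0) * fx x0 t\<bar> \<le> \<bar>x - x0\<bar> * d" if t: "t \<in> K" for t
      using elim t
      by (intro has_real_derivative_linearization_bound fx bound[unfolded dist_real_def]) auto
    have "integral S (f x) - integral S (f x0) - (x - x0) * integral S (fx x0)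
        = integral S (\<lambda>t. f x t - f x0 t - (x - x0) * fx x0 t)"
      using int_f[OF xX] int_f[OF X(2)] int_fx
      by (simp add: integral_diff integrable_diff integrable_on_mult_right)
    also have "norm \<dots> \<le> norm (x - x0) * d * measure lebesgue S"
      using X xX linearization K
      by (intro norm_integral_le_measure[OF S] integrable_diff int_f integrable_on_mult_right int_fx) auto
    finally have "norm ((integral S (f x) - integral S (f x0)) / (x - x0) - integral S (fx x0))
        \<le> d * measure lebesgue S"
      using elim by (simp add: field_simps norm_divide)
    then show ?case using d by (simp add: dist_norm)
  qed
qed

lemma integral_power2_param_C1:
  fixes u ut :: "'a::euclidean_space \<Rightarrow> real \<Rightarrow> real"
  assumes K: "compact K" "S \<subseteq> K" and S: "S \<in> lmeasurable" and Y: "open Y" "Y \<subseteq> X"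
    and u: "continuous_on (K \<times> X) (\<lambda>(x, t). u x t)" and ut: "continuous_on (K \<times> Y) (\<lambda>(x, t). ut x t)"
    and deriv: "\<And>x t. x \<in> K \<Longrightarrow> t \<in> Y \<Longrightarrow> ((\<lambda>s. u x s) has_real_derivative ut x t) (at t)"
  shows "continuous_on X (\<lambda>t. integral S (\<lambda>x. (u x t)^2))"
    and "continuous_on Y (\<lambda>t. integral S (\<lambda>x. 2 * u x t * ut x t))"
    and "\<And>t. t \<in> Y \<Longrightarrow>
      ((\<lambda>t. integral S (\<lambda>x. (u x t)^2)) has_real_derivative integral S (\<lambda>x. 2 * u x t * ut x t)) (at t)"
proof -
  note [continuous_intros] = continuous_on_compose2[OF u, where f="\<lambda>x. (x, s)" for s,
      unfolded split_beta fst_conv snd_conv]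
  have uY: "continuous_on (K \<times> Y) (\<lambda>(x, t). u x t)"
    using Y(2) by (intro continuous_on_subset[OF u]) auto
  have cont_deriv: "continuous_on (Y \<times> K) (\<lambda>(s, x). 2 * u x s * ut x s)"
    using continuous_on_swap_args[OF uY] continuous_on_swap_args[OF ut]
    unfolding case_prod_beta by (intro continuous_intros)
  show "continuous_on X (\<lambda>t. integral S (\<lambda>x. (u x t)^2))"
    using continuous_on_swap_args[OF u]
    by (intro integral_continuous_on_param_lmeasurable[OF K S])
      (auto simp: case_prod_beta intro!: continuous_intros)
  show "continuous_on Y (\<lambda>t. integral S (\<lambda>x. 2 * u x t * ut x t))"
    by (rule integral_continuous_on_param_lmeasurable[OF K S cont_deriv])
  show "((\<lambda>t. integral S (\<lambda>x. (u x t)^2)) has_real_derivative integral S (\<lambda>x. 2 * u x t * ut x t)) (at t)"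
    if "t \<in> Y" for t
  proof (rule leibniz_rule_lmeasurable[OF K S Y(1) that _ _ cont_deriv])
    show "(\<lambda>x. (u x s)^2) integrable_on S" if "s \<in> Y" for s
      using that Y(2) by (intro continuous_on_compact_imp_integrable_on[OF K S] continuous_intros) auto
    show "((\<lambda>s. (u x s)^2) has_real_derivative 2 * u x s * ut x s) (at s)" if "s \<in> Y" "x \<in> K" for s x
      using deriv[of x s] that by (auto intro!: derivative_eq_intros)
  qed
qed

section \<open>Symmetry of second derivatives\<close>

lemma has_real_derivative_along_line:
  fixes f :: "'a::real_inner \<Rightarrow> real"
  assumes "(f has_derivative (\<lambda>h. g \<bullet> h)) (at (c + s *\<^sub>R d))"
  shows "((\<lambda>s. f (c + s *\<^sub>R d)) has_real_derivative g \<bullet> d) (at s)"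
proof -
  have "((\<lambda>s. c + s *\<^sub>R d) has_derivative (\<lambda>t. t *\<^sub>R d)) (at s)"
    by (auto intro!: derivative_eq_intros)
  from has_derivative_compose[OF this assms]
  have "((\<lambda>s. f (c + s *\<^sub>R d)) has_derivative (\<lambda>t. g \<bullet> (t *\<^sub>R d))) (at s)" .
  moreover have "(\<lambda>t. g \<bullet> (t *\<^sub>R d)) = (*) (g \<bullet> d)" by (auto simp: mult.commute)
  ultimately show ?thesis by (simp add: has_field_derivative_def)
qed

lemma mean_value_along_line:
  fixes f :: "'a::real_inner \<Rightarrow> real"
  assumes h: "0 < h"
    and f: "\<And>s. 0 \<le> s \<Longrightarrow> s \<le> h \<Longrightarrow> (f has_derivative (\<lambda>k. g (c + s *\<^sub>R d) \<bullet> k)) (at (c + s *\<^sub>R d))"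
  obtains s where "0 < s" "s < h" "f (c + h *\<^sub>R d) - f c = h * (g (c + s *\<^sub>R d) \<bullet> d)"
proof -
  have "((\<lambda>s. f (c + s *\<^sub>R d)) has_real_derivative g (c + s *\<^sub>R d) \<bullet> d) (at s)"
    if "0 \<le> s" "s \<le> h" for s
    using f[OF that] by (rule has_real_derivative_along_line)
  from MVT2[OF h this] show thesis
    using that by auto
qed

lemma second_difference_eq_mixed_partial:
  fixes f :: "real^'n \<Rightarrow> real" and g :: "real^'n \<Rightarrow> real^'n" and H :: "real^'n \<Rightarrow> real^'n^'n"
  assumes f: "\<And>y. y \<in> cball x (2 * h) \<Longrightarrow> (f has_derivative (\<lambda>k. g y \<bullet> k)) (at y)"
    and g: "\<And>y. y \<in> cball x (2 * h) \<Longrightarrow> (g has_derivative (\<lambda>k. H y *v k)) (at y)"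
    and h: "h > 0"
  obtains p where "p \<in> cball x (2 * h)"
    "f (x + h *\<^sub>R axis i 1 + h *\<^sub>R axis j 1) - f (x + h *\<^sub>R axis i 1) - f (x + h *\<^sub>R axis j 1) + f x
       = h * h * H p $ i $ j"
proof -
  define ei where "ei = (axis i 1 :: real^'n)"
  define ej where "ej = (axis j 1 :: real^'n)"
  have in_cball: "x + s *\<^sub>R ei + r *\<^sub>R ej \<in> cball x (2 * h)"
    if "0 \<le> s" "s \<le> h" "0 \<le> r" "r \<le> h" for s r
  proof -
    have "norm (s *\<^sub>R ei + r *\<^sub>R ej) \<le> norm (s *\<^sub>R ei) + norm (r *\<^sub>R ej)"
      by (rule norm_triangle_ineq)
    also have "\<dots> \<le> 2 * h" using that by (simp add: ei_def ej_def)
    moreover have "dist x (x + s *\<^sub>R ei + r *\<^sub>R ej) = norm (s *\<^sub>R ei + r *\<^sub>R ej)"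
      by (simp add: dist_norm add.assoc norm_minus_commute add.commute)
    ultimately show ?thesis by simp
  qed
  have "((\<lambda>y. f (y + h *\<^sub>R ej) - f y) has_derivative (\<lambda>k. (g (y + h *\<^sub>R ej) - g y) \<bullet> k)) (at y)"
    if "y = x + s *\<^sub>R ei" "0 \<le> s" "s \<le> h" for y s
  proof -
    have "((\<lambda>y. y + h *\<^sub>R ej) has_derivative (\<lambda>k. k)) (at y)"
      by (auto intro!: derivative_eq_intros)
    from has_derivative_compose[OF this f] in_cball[of s h] in_cball[of s 0] f[of y] that h
    show ?thesis by (auto intro!: derivative_eq_intros simp: inner_diff_left)
  qed
  then obtain \<sigma> where \<sigma>: "0 < \<sigma>" "\<sigma> < h"
    "f (x + h *\<^sub>R ei + h *\<^sub>R ej) - f (x + h *\<^sub>R ei) - (f (x + h *\<^sub>R ej) - f x)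
       = h * ((g (x + \<sigma> *\<^sub>R ei + h *\<^sub>R ej) - g (x + \<sigma> *\<^sub>R ei)) \<bullet> ei)"
    using mean_value_along_line[OF h, of "\<lambda>y. f (y + h *\<^sub>R ej) - f y" "\<lambda>y. g (y + h *\<^sub>R ej) - g y" x ei]
    by auto
  have "((\<lambda>y. g y $ i) has_derivative (\<lambda>k. H y $ i \<bullet> k)) (at y)"
    if "y = x + \<sigma> *\<^sub>R ei + r *\<^sub>R ej" "0 \<le> r" "r \<le> h" for y r
    using bounded_linear.has_derivative[OF bounded_linear_vec_nth g[of y]] in_cball[of \<sigma> r] that \<sigma>
    by (simp add: matrix_vector_mul_component)
  then obtain \<rho> where \<rho>: "0 < \<rho>" "\<rho> < h"
    "g (x + \<sigma> *\<^sub>R ei + h *\<^sub>R ej) $ i - g (x + \<sigma> *\<^sub>R ei) $ i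
       = h * (H (x + \<sigma> *\<^sub>R ei + \<rho> *\<^sub>R ej) $ i \<bullet> ej)"
    using mean_value_along_line[OF h, of "\<lambda>y. g y $ i" "\<lambda>y. H y $ i" "x + \<sigma> *\<^sub>R ei" ej]
    by auto
  show ?thesis
  proof
    show "x + \<sigma> *\<^sub>R ei + \<rho> *\<^sub>R ej \<in> cball x (2 * h)"
      using in_cball[of \<sigma> \<rho>] \<sigma> \<rho> by simp
    show "f (x + h *\<^sub>R axis i 1 + h *\<^sub>R axis j 1) - f (x + h *\<^sub>R axis i 1)
        - f (x + h *\<^sub>R axis j 1) + f x = h * h * H (x + \<sigma> *\<^sub>R ei + \<rho> *\<^sub>R ej) $ i $ j"
      using \<sigma>(3) \<rho>(3) by (simp add: ei_def ej_def inner_axis algebra_simps)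
  qed
qed

lemma hessian_symmetric:
  fixes f :: "real^'n \<Rightarrow> real" and g :: "real^'n \<Rightarrow> real^'n" and H :: "real^'n \<Rightarrow> real^'n^'n"
  assumes U: "open U" "x \<in> U"
    and f: "\<And>y. y \<in> U \<Longrightarrow> (f has_derivative (\<lambda>k. g y \<bullet> k)) (at y)"
    and g: "\<And>y. y \<in> U \<Longrightarrow> (g has_derivative (\<lambda>k. H y *v k)) (at y)"
    and H: "continuous_on U H"
  shows "H x $ i $ j = H x $ j $ i"
proof (rule ccontr)
  assume "H x $ i $ j \<noteq> H x $ j $ i"
  then have d: "\<bar>H x $ i $ j - H x $ j $ i\<bar> / 2 > 0" by simp
  obtain \<delta> where \<delta>: "\<delta> > 0"
    and near: "\<And>y. dist y x < \<delta> \<Longrightarrow> dist (H y) (H x) < \<bar>H x $ i $ j - H x $ j $ i\<bar> / 2"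
    using H U d unfolding continuous_on_eq_continuous_at[OF U(1)] continuous_at_eps_delta by metis
  obtain r where r: "r > 0" "ball x r \<subseteq> U" using U open_contains_ball by blast
  define h where "h = min \<delta> r / 4"
  have h: "h > 0" "2 * h < \<delta>" "cball x (2 * h) \<subseteq> U"
    using \<delta> r by (auto simp: h_def)
  obtain p where p: "p \<in> cball x (2 * h)" and
    "f (x + h *\<^sub>R axis i 1 + h *\<^sub>R axis j 1) - f (x + h *\<^sub>R axis i 1)
       - f (x + h *\<^sub>R axis j 1) + f x = h * h * H p $ i $ j"
    using second_difference_eq_mixed_partial[of x h f g H] f g h by blast
  moreover obtain p' where p': "p' \<in> cball x (2 * h)" and
    "f (x + h *\<^sub>R axis j 1 + h *\<^sub>R axis i 1) - f (x + h *\<^sub>R axis j 1)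
       - f (x + h *\<^sub>R axis i 1) + f x = h * h * H p' $ j $ i"
    using second_difference_eq_mixed_partial[of x h f g H] f g h by blast
  ultimately have eq: "H p $ i $ j = H p' $ j $ i"
    using h by (simp add: algebra_simps)
  have entry_le: "\<bar>H y $ k $ l - H x $ k $ l\<bar> < \<bar>H x $ i $ j - H x $ j $ i\<bar> / 2"
    if "y \<in> cball x (2 * h)" for y k l
  proof -
    have "\<bar>(H y - H x) $ k $ l\<bar> \<le> norm (H y - H x)"
      by (rule order_trans[OF component_le_norm_cart Finite_Cartesian_Product.norm_nth_le])
    also have "\<dots> < \<bar>H x $ i $ j - H x $ j $ i\<bar> / 2"
      using near[of y] that h by (simp only: dist_norm[symmetric]) (simp add: dist_commute)
    finally show ?thesis by simp
  qed
  from entry_le[OF p, of i j] entry_le[OF p', of j i] eq show False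
    by (auto simp: abs_if split: if_split_asm)
qed

section \<open>Plane matrix algebra\<close>

definition outer_prod :: "real^'n \<Rightarrow> real^'m \<Rightarrow> real^'m^'n" where
  "outer_prod p q = (\<chi> i j. p $ i * q $ j)"

lemma outer_prod_mult_vec: "outer_prod p q *v h = (q \<bullet> h) *\<^sub>R p"
  by (simp add: outer_prod_def vec_eq_iff matrix_vector_mult_def inner_vec_def
      sum_distrib_left algebra_simps)

lemma trace_outer_prod: "trace (outer_prod p q) = p \<bullet> q"
  by (simp add: outer_prod_def trace_def inner_vec_def)

lemma trace_scaleR: "trace (c *\<^sub>R A) = c * trace (A :: real^'n^'n)"
  by (simp add: trace_def sum_distrib_left)

definition rot90 :: "real^2^2" where
  "rot90 = (\<chi> i j. if i = j then 0 else if i = 1 then -1 else 1)"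

lemma qvec_eq_rot90: "qvec p = rot90 *v p"
  by (simp add: qvec_def rot90_def vec_eq_iff matrix_vector_mult_def sum_2 forall_2)

lemma inner_qvec_left: "qvec p \<bullet> r = - (p \<bullet> qvec r)"
  by (simp add: qvec_def inner_vec_def sum_2)

lemma trace_rot90_mult: "trace (rot90 ** M) = M $ 1 $ 2 - M $ 2 $ 1"
  by (simp add: rot90_def trace_def matrix_matrix_mult_def sum_2)

lemma Dmat_mult_vec_inner_nonneg:
  assumes "0 \<le> a" "0 \<le> m" "a \<le> b"
  shows "0 \<le> (Dmat a b m q *v w) \<bullet> w"
proof -
  have "(Dmat a b m q *v w) \<bullet> w = (a * norm q + m) * (w \<bullet> w)
      + (if q = 0 then 0 else ((b - a) / norm q) * (q \<bullet> w)^2)"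
    by (simp add: Dmat_def outer_prod_def[symmetric] matrix_vector_mult_add_rdistrib
        outer_prod_mult_vec scaleR_matrix_vector_assoc[symmetric] power2_eq_square algebra_simps)
  also have "\<dots> \<ge> 0" using assms by auto
  finally show ?thesis .
qed

section \<open>Vector fields and the divergence theorem\<close>

lemma C1_field_imp_continuous_on: "C1_field U F J \<Longrightarrow> continuous_on U F"
  unfolding C1_field_def by (meson continuous_at_imp_continuous_on has_derivative_continuous)

lemma C1_field_scaleR:
  assumes u: "\<And>x. x \<in> U \<Longrightarrow> (u has_derivative (\<lambda>h. gu x \<bullet> h)) (at x)"
    and gu: "continuous_on U gu" and F: "C1_field U F J"
  shows "C1_field U (\<lambda>x. u x *\<^sub>R F x) (\<lambda>x. u x *\<^sub>R J x + outer_prod (F x) (gu x))"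
  unfolding C1_field_def
proof (intro conjI ballI)
  fix x assume x: "x \<in> U"
  have "((\<lambda>x. u x *\<^sub>R F x) has_derivative (\<lambda>h. u x *\<^sub>R (J x *v h) + (gu x \<bullet> h) *\<^sub>R F x)) (at x)"
    using u F x by (auto intro!: derivative_eq_intros simp: C1_field_def)
  then show "((\<lambda>x. u x *\<^sub>R F x) has_derivative (\<lambda>h. (u x *\<^sub>R J x + outer_prod (F x) (gu x)) *v h)) (at x)"
    by (simp add: matrix_vector_mult_add_rdistrib outer_prod_mult_vec scaleR_matrix_vector_assoc)
next
  have "continuous_on U u"
    using u by (meson continuous_at_imp_continuous_on has_derivative_continuous)
  then show "continuous_on U (\<lambda>x. u x *\<^sub>R J x + outer_prod (F x) (gu x))"
    using F gu C1_field_imp_continuous_on[OF F] unfolding outer_prod_def C1_field_def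
    by (intro continuous_intros) auto
qed

lemma C1_field_matrix_mult:
  assumes "C1_field U F J"
  shows "C1_field U (\<lambda>x. A *v F x) (\<lambda>x. A ** J x)"
  unfolding C1_field_def
proof (intro conjI ballI)
  fix x assume "x \<in> U"
  then have "(F has_derivative (\<lambda>h. J x *v h)) (at x)"
    using assms by (auto simp: C1_field_def)
  from bounded_linear.has_derivative[OF matrix_vector_mul_bounded_linear this]
  show "((\<lambda>x. A *v F x) has_derivative (\<lambda>h. (A ** J x) *v h)) (at x)"
    by (simp add: matrix_vector_mul_assoc)
next
  show "continuous_on U (\<lambda>x. A ** J x)"
    using assms unfolding C1_field_def matrix_matrix_mult_def
    by (intro continuous_on_vec_lambda continuous_intros) auto
qed

lemma divergence_domain_integral_trace_eq_0:
  assumes "divergence_domain \<Omega> \<nu> \<sigma>" "open U" "closure \<Omega> \<subseteq> U" "C1_field U F J"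
    and flux: "\<And>x. x \<in> frontier \<Omega> \<Longrightarrow> F x \<bullet> \<nu> x = 0"
  shows "integral \<Omega> (\<lambda>x. trace (J x)) = 0"
proof -
  have "integral \<Omega> (\<lambda>x. trace (J x)) = (\<integral>x. F x \<bullet> \<nu> x \<partial>\<sigma>)"
    using assms unfolding divergence_domain_def by blast
  also have "\<dots> = (\<integral>x. 0 \<partial>\<sigma>)"
    using assms(1) flux by (intro Bochner_Integration.integral_cong) (auto simp: divergence_domain_def)
  finally show ?thesis by simp
qed

lemma divergence_domain_integral_mult_trace:
  assumes \<Omega>: "open \<Omega>" "bounded \<Omega>" and reg: "divergence_domain \<Omega> \<nu> \<sigma>"
    and U: "open U" "closure \<Omega> \<subseteq> U"
    and u: "\<And>x. x \<in> U \<Longrightarrow> (u has_derivative (\<lambda>h. gu x \<bullet> h)) (at x)" and gu: "continuous_on U gu"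
    and W: "C1_field U W J" and flux: "\<And>x. x \<in> frontier \<Omega> \<Longrightarrow> W x \<bullet> \<nu> x = 0"
  shows "integral \<Omega> (\<lambda>x. u x * trace (J x)) = - integral \<Omega> (\<lambda>x. W x \<bullet> gu x)"
proof -
  have "continuous_on U u"
    using u by (meson continuous_at_imp_continuous_on has_derivative_continuous)
  then have cont: "continuous_on (closure \<Omega>) (\<lambda>x. u x * trace (J x))"
    "continuous_on (closure \<Omega>) (\<lambda>x. W x \<bullet> gu x)"
    using W gu C1_field_imp_continuous_on[OF W] U(2) unfolding C1_field_def trace_def
    by (auto intro!: continuous_intros intro: continuous_on_subset)
  have "integral \<Omega> (\<lambda>x. trace (u x *\<^sub>R J x + outer_prod (W x) (gu x))) = 0"
    using flux by (intro divergence_domain_integral_trace_eq_0[OF reg U C1_field_scaleR[OF u gu W]])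
      auto
  then have "integral \<Omega> (\<lambda>x. u x * trace (J x) + W x \<bullet> gu x) = 0"
    by (simp add: trace_add trace_scaleR trace_outer_prod)
  then show ?thesis
    using cont by (simp add: integral_add continuous_on_closure_imp_integrable_on[OF \<Omega>])
qed

lemma divergence_domain_integral_transport_eq_0:
  assumes \<Omega>: "open \<Omega>" "bounded \<Omega>" and reg: "divergence_domain \<Omega> \<nu> \<sigma>"
    and U: "open U" "closure \<Omega> \<subseteq> U"
    and u: "\<And>x. x \<in> U \<Longrightarrow> (u has_derivative (\<lambda>h. gu x \<bullet> h)) (at x)" and gu: "C1_field U gu Hu"
    and v: "\<And>x. x \<in> U \<Longrightarrow> (v has_derivative (\<lambda>h. gv x \<bullet> h)) (at x)" and gv: "continuous_on U gv"
    and v_boundary: "\<And>x. x \<in> frontier \<Omega> \<Longrightarrow> v x = 0"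
  shows "integral \<Omega> (\<lambda>x. u x * (gu x \<bullet> qvec (gv x))) = 0"
proof -
  define M where "M x = u x *\<^sub>R Hu x + outer_prod (gu x) (gu x)" for x
  have "C1_field U (\<lambda>x. v x *\<^sub>R (rot90 *v (u x *\<^sub>R gu x)))
      (\<lambda>x. v x *\<^sub>R (rot90 ** M x) + outer_prod (rot90 *v (u x *\<^sub>R gu x)) (gv x))"
    unfolding M_def
    by (intro C1_field_scaleR[OF v gv] C1_field_matrix_mult
        C1_field_scaleR[OF u C1_field_imp_continuous_on[OF gu] gu])
  then have "integral \<Omega> (\<lambda>x. trace (v x *\<^sub>R (rot90 ** M x)
      + outer_prod (rot90 *v (u x *\<^sub>R gu x)) (gv x))) = 0"
    using v_boundary by (intro divergence_domain_integral_trace_eq_0[OF reg U]) auto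
  moreover have "trace (v x *\<^sub>R (rot90 ** M x) + outer_prod (rot90 *v (u x *\<^sub>R gu x)) (gv x))
      = - (u x * (gu x \<bullet> qvec (gv x)))" if "x \<in> \<Omega>" for x
  proof -
    have "x \<in> U" using that U(2) closure_subset by blast
    then have "Hu x $ 1 $ 2 = Hu x $ 2 $ 1"
      using gu u by (intro hessian_symmetric[OF U(1), of x u gu Hu]) (auto simp: C1_field_def)
    then have "M x $ 1 $ 2 = M x $ 2 $ 1"
      by (simp add: M_def outer_prod_def mult.commute)
    then show ?thesis
      by (simp add: trace_add trace_scaleR trace_rot90_mult trace_outer_prod qvec_eq_rot90[symmetric]
          inner_qvec_left)
  qed
  ultimately have "integral \<Omega> (\<lambda>x. - (u x * (gu x \<bullet> qvec (gv x)))) = 0"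
    by (metis (no_types, lifting) integral_cong)
  then show ?thesis by (simp add: integral_neg)
qed

lemma energy_identity:
  assumes \<Omega>: "open \<Omega>" "bounded \<Omega>" and reg: "divergence_domain \<Omega> \<nu> \<sigma>"
    and U: "open U" "closure \<Omega> \<subseteq> U"
    and u: "\<And>x. x \<in> U \<Longrightarrow> (u has_derivative (\<lambda>h. gu x \<bullet> h)) (at x)" and gu: "C1_field U gu Hu"
    and v: "\<And>x. x \<in> U \<Longrightarrow> (v has_derivative (\<lambda>h. gv x \<bullet> h)) (at x)" and gv: "continuous_on U gv"
    and W: "C1_field U W J"
    and equation: "\<And>x. x \<in> \<Omega> \<Longrightarrow> ut x - trace (J x) = - (gu x \<bullet> qvec (gv x))"
    and W_flux: "\<And>x. x \<in> frontier \<Omega> \<Longrightarrow> W x \<bullet> \<nu> x = 0"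
    and v_boundary: "\<And>x. x \<in> frontier \<Omega> \<Longrightarrow> v x = 0"
  shows "integral \<Omega> (\<lambda>x. 2 * u x * ut x) = - 2 * integral \<Omega> (\<lambda>x. W x \<bullet> gu x)"
proof -
  have cgu: "continuous_on U gu" by (rule C1_field_imp_continuous_on[OF gu])
  have "continuous_on U u" "continuous_on U v"
    using u v by (meson continuous_at_imp_continuous_on has_derivative_continuous)+
  then have cont: "continuous_on (closure \<Omega>) (\<lambda>x. u x * trace (J x))"
    "continuous_on (closure \<Omega>) (\<lambda>x. u x * (gu x \<bullet> qvec (gv x)))"
    using W cgu gv U(2) unfolding C1_field_def trace_def qvec_eq_rot90
    by (auto intro!: continuous_intros bounded_linear.continuous_on[OF matrix_vector_mul_bounded_linear]
        intro: continuous_on_subset)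
  have "integral \<Omega> (\<lambda>x. 2 * u x * ut x)
      = integral \<Omega> (\<lambda>x. 2 * (u x * trace (J x)) - 2 * (u x * (gu x \<bullet> qvec (gv x))))"
  proof (rule integral_cong)
    fix x assume "x \<in> \<Omega>"
    then have "ut x = trace (J x) - gu x \<bullet> qvec (gv x)"
      using equation by (simp add: algebra_simps)
    then show "2 * u x * ut x = 2 * (u x * trace (J x)) - 2 * (u x * (gu x \<bullet> qvec (gv x)))"
      by (simp add: right_diff_distrib)
  qed
  also have "\<dots> = 2 * integral \<Omega> (\<lambda>x. u x * trace (J x))
      - 2 * integral \<Omega> (\<lambda>x. u x * (gu x \<bullet> qvec (gv x)))"
    using cont by (simp add: integral_diff continuous_on_closure_imp_integrable_on[OF \<Omega>]
        integrable_on_mult_right)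
  finally show ?thesis
    using divergence_domain_integral_mult_trace[OF \<Omega> reg U u cgu W W_flux]
      divergence_domain_integral_transport_eq_0[OF \<Omega> reg U u gu v gv v_boundary] by simp
qed

section \<open>Energy estimates\<close>

lemma nn_integral_power2_le:
  fixes f g :: "'a \<Rightarrow> real"
  assumes [measurable]: "f \<in> borel_measurable M" "g \<in> borel_measurable M" and "\<epsilon> > 0"
  shows "(\<integral>\<^sup>+x. ennreal ((f x)^2) \<partial>M)
    \<le> ennreal (1 + 1/\<epsilon>) * (\<integral>\<^sup>+x. ennreal ((f x - g x)^2) \<partial>M)
      + ennreal (1 + \<epsilon>) * (\<integral>\<^sup>+x. ennreal ((g x)^2) \<partial>M)"
proof -
  have young: "p^2 \<le> (1 + 1/\<epsilon>) * (p - q)^2 + (1 + \<epsilon>) * q^2" for p q :: real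
  proof -
    have "0 \<le> ((p - q) - \<epsilon> * q)^2 / \<epsilon>" using \<open>\<epsilon> > 0\<close> by simp
    also have "\<dots> = (1 + 1/\<epsilon>) * (p - q)^2 + (1 + \<epsilon>) * q^2 - p^2"
      using \<open>\<epsilon> > 0\<close> by (simp add: field_simps power2_eq_square)
    finally show ?thesis by simp
  qed
  have "(\<integral>\<^sup>+x. ennreal ((f x)^2) \<partial>M)
      \<le> (\<integral>\<^sup>+x. ennreal (1 + 1/\<epsilon>) * ennreal ((f x - g x)^2) + ennreal (1 + \<epsilon>) * ennreal ((g x)^2) \<partial>M)"
    using \<open>\<epsilon> > 0\<close> young
    by (intro nn_integral_mono) (simp add: ennreal_mult[symmetric] ennreal_plus[symmetric] del: ennreal_plus)
  also have "\<dots> = ennreal (1 + 1/\<epsilon>) * (\<integral>\<^sup>+x. ennreal ((f x - g x)^2) \<partial>M)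
      + ennreal (1 + \<epsilon>) * (\<integral>\<^sup>+x. ennreal ((g x)^2) \<partial>M)"
    by (simp add: nn_integral_add nn_integral_cmult)
  finally show ?thesis .
qed

lemma Limsup_nn_integral_power2_le:
  fixes f :: "'b \<Rightarrow> 'a \<Rightarrow> real" and g :: "'a \<Rightarrow> real"
  assumes f: "\<forall>\<^sub>F t in F. f t \<in> borel_measurable M" and g: "g \<in> borel_measurable M"
    and L2: "((\<lambda>t. \<integral>\<^sup>+x. ennreal ((f t x - g x)^2) \<partial>M) \<longlongrightarrow> 0) F"
    and finite: "(\<integral>\<^sup>+x. ennreal ((g x)^2) \<partial>M) < \<infinity>"
  shows "Limsup F (\<lambda>t. \<integral>\<^sup>+x. ennreal ((f t x)^2) \<partial>M) \<le> (\<integral>\<^sup>+x. ennreal ((g x)^2) \<partial>M)"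
proof (cases "F = bot")
  case False
  obtain c where c: "(\<integral>\<^sup>+x. ennreal ((g x)^2) \<partial>M) = ennreal c" "0 \<le> c"
    using finite by (cases "\<integral>\<^sup>+x. ennreal ((g x)^2) \<partial>M") auto
  have "Limsup F (\<lambda>t. \<integral>\<^sup>+x. ennreal ((f t x)^2) \<partial>M) \<le> ennreal ((1 + \<epsilon>) * c)" if "\<epsilon> > 0" for \<epsilon>
  proof -
    have "Limsup F (\<lambda>t. \<integral>\<^sup>+x. ennreal ((f t x)^2) \<partial>M)
        \<le> Limsup F (\<lambda>t. ennreal (1 + 1/\<epsilon>) * (\<integral>\<^sup>+x. ennreal ((f t x - g x)^2) \<partial>M)
            + ennreal (1 + \<epsilon>) * ennreal c)"
      by (intro Limsup_mono eventually_mono[OF f]) (metis c(1) nn_integral_power2_le[OF _ g that])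
    also have "\<dots> = ennreal (1 + 1/\<epsilon>) * 0 + ennreal (1 + \<epsilon>) * ennreal c"
      using False L2 by (intro lim_imp_Limsup tendsto_intros) auto
    also have "\<dots> = ennreal ((1 + \<epsilon>) * c)"
      using that c by (simp add: ennreal_mult)
    finally show ?thesis .
  qed
  moreover have "((\<lambda>\<epsilon>. ennreal ((1 + \<epsilon>) * c)) \<longlongrightarrow> ennreal ((1 + 0) * c)) (at_right 0)"
    by (intro tendsto_intros)
  ultimately show ?thesis
    using c by (intro tendsto_lowerbound[where F="at_right 0"]) (auto intro: eventually_at_rightI[of 0 1])
qed simp

lemma Limsup_nn_set_integral_power2_le:
  fixes f :: "'b \<Rightarrow> 'a::euclidean_space \<Rightarrow> real" and g :: "'a \<Rightarrow> real"
  assumes \<Omega>: "\<Omega> \<in> sets lborel" and f: "\<forall>\<^sub>F t in F. continuous_on \<Omega> (f t)"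
    and g: "g \<in> borel_measurable lborel"
    and L2: "((\<lambda>t. \<integral>\<^sup>+x\<in>\<Omega>. ennreal ((f t x - g x)^2) \<partial>lborel) \<longlongrightarrow> 0) F"
    and finite: "(\<integral>\<^sup>+x\<in>\<Omega>. ennreal ((g x)^2) \<partial>lborel) < \<infinity>"
  shows "Limsup F (\<lambda>t. \<integral>\<^sup>+x\<in>\<Omega>. ennreal ((f t x)^2) \<partial>lborel) \<le> (\<integral>\<^sup>+x\<in>\<Omega>. ennreal ((g x)^2) \<partial>lborel)"
proof -
  have restrict: "(\<integral>\<^sup>+x. h x \<partial>restrict_space lborel \<Omega>) = (\<integral>\<^sup>+x\<in>\<Omega>. h x \<partial>lborel)" for h
    using \<Omega> by (simp add: nn_integral_restrict_space)
  have "f t \<in> borel_measurable (restrict_space lborel \<Omega>)" if "continuous_on \<Omega> (f t)" for t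
    using borel_measurable_continuous_on_restrict[OF that]
      measurable_cong_sets[OF sets_restrict_space_cong[OF sets_lborel] refl]
    by simp
  then show ?thesis
    using Limsup_nn_integral_power2_le[of f "restrict_space lborel \<Omega>" F g] f g L2 finite
    by (simp add: restrict eventually_mono measurable_restrict_space1)
qed

lemma nn_integral_Ioo_le_Icc_bound:
  fixes g :: "real \<Rightarrow> real"
  assumes g: "continuous_on {a<..<b} g"
    and Icc: "\<And>s t. a < s \<Longrightarrow> s < t \<Longrightarrow> t < b \<Longrightarrow> (\<integral>\<^sup>+x\<in>{s..t}. ennreal (g x) \<partial>lborel) \<le> C"
  shows "(\<integral>\<^sup>+x\<in>{a<..<b}. ennreal (g x) \<partial>lborel) \<le> C"
proof (cases "a < b")
  case True
  then have "ereal a < ereal b" by simp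
  then obtain u l :: "nat \<Rightarrow> real" where
    "einterval (ereal a) (ereal b) = (\<Union>i. {l i .. u i})" "incseq u" "decseq l" "\<And>i. l i < u i"
    "\<And>i. ereal a < ereal (l i)" "\<And>i. ereal (u i) < ereal b"
    by (rule einterval_Icc_approximation) blast
  then have approx: "{a<..<b} = (\<Union>i. {l i .. u i})" "incseq u" "decseq l" "\<And>i. l i < u i"
    "\<And>i. a < l i" "\<And>i. u i < b"
    by simp_all
  have sub: "{l i .. u i} \<subseteq> {a<..<b}" for i
    unfolding approx(1) by blast
  define G where "G i x = ennreal (g x) * indicator {l i .. u i} x" for i x
  have "incseq G"
  proof (intro incseq_SucI le_funI)
    fix i x
    have "{l i .. u i} \<subseteq> {l (Suc i) .. u (Suc i)}"
      using approx(2,3) by (auto simp: incseq_Suc_iff decseq_Suc_iff)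
    then show "G i x \<le> G (Suc i) x"
      by (auto simp: G_def split: split_indicator)
  qed
  have G_measurable: "G i \<in> borel_measurable lborel" for i
  proof -
    have "(\<lambda>x. indicator {l i .. u i} x *\<^sub>R g x) \<in> borel_measurable borel"
      using continuous_on_subset[OF g sub[of i]]
      by (intro borel_measurable_continuous_on_indicator) auto
    then have "(\<lambda>x. ennreal (indicator {l i .. u i} x * g x)) \<in> borel_measurable lborel"
      by (simp add: measurable_compose[OF _ measurable_ennreal])
    moreover have "G i = (\<lambda>x. ennreal (indicator {l i .. u i} x * g x))"
      by (simp add: G_def fun_eq_iff split: split_indicator)
    ultimately show ?thesis by simp
  qed
  have "ennreal (g x) * indicator {a<..<b} x \<le> (SUP i. G i x)" for x
  proof (cases "x \<in> {a<..<b}")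
    case True
    then obtain i where "x \<in> {l i .. u i}" using approx(1) by auto
    then show ?thesis using True by (auto intro!: SUP_upper2[of i] simp: G_def)
  qed simp
  then have "(\<integral>\<^sup>+x\<in>{a<..<b}. ennreal (g x) \<partial>lborel) \<le> (\<integral>\<^sup>+x. (SUP i. G i x) \<partial>lborel)"
    by (intro nn_integral_mono)
  also have "\<dots> = (SUP i. integral\<^sup>N lborel (G i))"
    by (rule nn_integral_monotone_convergence_SUP[OF \<open>incseq G\<close> G_measurable])
  also have "\<dots> \<le> C"
    using approx(4-6) by (intro SUP_least) (simp add: G_def[abs_def] Icc)
  finally show ?thesis .
qed simp

lemma nn_integral_neg_derivative_le:
  fixes F g :: "real \<Rightarrow> real"
  assumes deriv: "\<And>t. t \<in> {a<..<b} \<Longrightarrow> (F has_real_derivative - g t) (at t)"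
    and g: "continuous_on {a<..<b} g" "\<And>t. t \<in> {a<..<b} \<Longrightarrow> 0 \<le> g t"
    and oscillation: "\<And>s t. s \<in> {a<..<b} \<Longrightarrow> t \<in> {a<..<b} \<Longrightarrow> F s - F t \<le> C"
  shows "(\<integral>\<^sup>+t\<in>{a<..<b}. ennreal (g t) \<partial>lborel) \<le> ennreal C"
proof (rule nn_integral_Ioo_le_Icc_bound[OF g(1)])
  fix s t assume st: "a < s" "s < t" "t < b"
  have "(g has_integral (- F t) - (- F s)) {s..t}"
  proof (rule fundamental_theorem_of_calculus)
    fix x assume "x \<in> {s..t}"
    then have "((\<lambda>t. - F t) has_real_derivative g x) (at x)"
      using deriv[of x] st by (auto intro!: derivative_eq_intros)
    then show "((\<lambda>t. - F t) has_vector_derivative g x) (at x within {s..t})"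
      by (simp add: has_real_derivative_iff_has_vector_derivative[symmetric] has_field_derivative_at_within)
  qed (use st in auto)
  then have "(\<integral>\<^sup>+x\<in>{s..t}. ennreal (g x) \<partial>lborel) = ennreal (F s - F t)"
    using st g(2) by (subst nn_integral_has_integral_lebesgue') auto
  also have "\<dots> \<le> ennreal C"
    using st by (intro ennreal_leI oscillation) auto
  finally show "(\<integral>\<^sup>+x\<in>{s..t}. ennreal (g x) \<partial>lborel) \<le> ennreal C" .
qed

lemma decreasing_energy_bounds:
  fixes e g :: "real \<Rightarrow> real"
  assumes deriv: "\<And>t. t \<in> {0<..<T} \<Longrightarrow> (e has_real_derivative - 2 * g t) (at t)"
    and g: "continuous_on {0<..<T} g" "\<And>t. t \<in> {0<..<T} \<Longrightarrow> 0 \<le> g t"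
    and e: "continuous_on {0<..T} e" "\<And>t. t \<in> {0<..T} \<Longrightarrow> 0 \<le> e t"
    and initial: "Limsup (at_right 0) (\<lambda>t. ennreal (e t)) \<le> ennreal e0" "0 \<le> e0"
  shows "\<And>t. t \<in> {0<..T} \<Longrightarrow> e t \<le> e0"
    and "(\<integral>\<^sup>+t\<in>{0<..<T}. ennreal (g t) \<partial>lborel) \<le> ennreal (e0 / 2)"
proof -
  have antimono: "e t \<le> e s" if "0 < s" "s \<le> t" "t \<le> T" for s t
  proof (rule DERIV_nonpos_imp_decreasing_open[OF \<open>s \<le> t\<close>])
    show "\<exists>y. (e has_real_derivative y) (at x) \<and> y \<le> 0" if "s < x" "x < t" for x
      using that \<open>0 < s\<close> \<open>t \<le> T\<close> deriv g(2) by (intro exI[of _ "- 2 * g x"]) auto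
    show "continuous_on {s..t} e"
      using that by (intro continuous_on_subset[OF e(1)]) auto
  qed
  show bound: "e t \<le> e0" if t: "t \<in> {0<..T}" for t
  proof -
    have "ennreal (e t) \<le> Limsup (at_right 0) (\<lambda>s. ennreal (e s))"
      using t antimono by (intro le_Limsup eventually_at_rightI[of 0 t]) (auto intro: ennreal_leI)
    also have "\<dots> \<le> ennreal e0" by (rule initial(1))
    finally show ?thesis
      using initial(2) by (simp add: ennreal_le_iff)
  qed
  show "(\<integral>\<^sup>+t\<in>{0<..<T}. ennreal (g t) \<partial>lborel) \<le> ennreal (e0 / 2)"
  proof (rule nn_integral_neg_derivative_le[where F="\<lambda>t. e t / 2"])
    show "((\<lambda>t. e t / 2) has_real_derivative - g t) (at t)" if "t \<in> {0<..<T}" for t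
      using deriv[OF that] by (auto intro!: derivative_eq_intros)
    show "e s / 2 - e t / 2 \<le> e0 / 2" if "s \<in> {0<..<T}" "t \<in> {0<..<T}" for s t
      using bound[of s] e(2)[of t] that by auto
  qed (use g in auto)
qed

lemma energy_bounds:
  fixes u ut G :: "'a::euclidean_space \<Rightarrow> real \<Rightarrow> real" and u0 :: "'a \<Rightarrow> real"
  assumes \<Omega>: "open \<Omega>" "bounded \<Omega>" and "0 < T"
    and u: "continuous_on (closure \<Omega> \<times> {0<..T}) (\<lambda>(x, t). u x t)"
    and ut: "continuous_on (closure \<Omega> \<times> {0<..<T}) (\<lambda>(x, t). ut x t)"
    and deriv: "\<And>x t. x \<in> closure \<Omega> \<Longrightarrow> t \<in> {0<..<T} \<Longrightarrow> ((\<lambda>s. u x s) has_real_derivative ut x t) (at t)"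
    and dissipation: "\<And>t. t \<in> {0<..<T} \<Longrightarrow>
          integral \<Omega> (\<lambda>x. 2 * u x t * ut x t) = - 2 * integral \<Omega> (\<lambda>x. G x t)"
    and G: "\<And>t. t \<in> {0<..<T} \<Longrightarrow> (\<lambda>x. G x t) integrable_on \<Omega>" "\<And>x t. x \<in> \<Omega> \<Longrightarrow> 0 \<le> G x t"
    and u0: "u0 \<in> borel_measurable lborel" "(\<integral>\<^sup>+x\<in>\<Omega>. ennreal ((u0 x)^2) \<partial>lborel) = ennreal e0" "0 \<le> e0"
    and L2: "((\<lambda>t. \<integral>\<^sup>+x\<in>\<Omega>. ennreal ((u x t - u0 x)^2) \<partial>lborel) \<longlongrightarrow> 0) (at_right 0)"
  shows "\<And>t. t \<in> {0<..T} \<Longrightarrow> (\<integral>\<^sup>+x\<in>\<Omega>. ennreal ((u x t)^2) \<partial>lborel) \<le> ennreal e0"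
    and "(\<integral>\<^sup>+t\<in>{0<..<T}. (\<integral>\<^sup>+x\<in>\<Omega>. ennreal (G x t) \<partial>lborel) \<partial>lborel) \<le> ennreal (e0 / 2)"
proof -
  define e where "e t = integral \<Omega> (\<lambda>x. (u x t)^2)" for t
  define g where "g t = integral \<Omega> (\<lambda>x. G x t)" for t
  have K: "compact (closure \<Omega>)" "\<Omega> \<subseteq> closure \<Omega>" "\<Omega> \<in> lmeasurable"
    using \<Omega> by (auto simp: compact_closure closure_subset lmeasurable_open)
  have u_slice: "continuous_on (closure \<Omega>) (\<lambda>x. u x t)" if "t \<in> {0<..T}" for t
    by (rule continuous_on_compose2[OF u, where f="\<lambda>x. (x, t)", unfolded split_beta fst_conv snd_conv])
      (use that in \<open>auto intro!: continuous_intros\<close>)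
  have int_u2: "(\<lambda>x. (u x t)^2) integrable_on \<Omega>" if "t \<in> {0<..T}" for t
    using u_slice[OF that] by (intro continuous_on_closure_imp_integrable_on \<Omega> continuous_intros)
  have e_eq: "(\<integral>\<^sup>+x\<in>\<Omega>. ennreal ((u x t)^2) \<partial>lborel) = ennreal (e t)" if "t \<in> {0<..T}" for t
    unfolding e_def using int_u2[OF that] by (rule nn_set_integral_eq_integral) simp
  have Y: "{0<..<T} \<subseteq> {0<..T}" by auto
  note e_C1 = integral_power2_param_C1[OF K(1-3) open_greaterThanLessThan Y u ut]
  have e_cont: "continuous_on {0<..T} e"
    unfolding e_def using deriv by (rule e_C1(1))
  have e_deriv: "(e has_real_derivative - 2 * g t) (at t)" if t: "t \<in> {0<..<T}" for t
    unfolding e_def g_def dissipation[OF t, symmetric] using deriv t by (rule e_C1(3))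
  have "continuous_on {0<..<T} (\<lambda>t. - (1/2) * integral \<Omega> (\<lambda>x. 2 * u x t * ut x t))"
    using e_C1(2)[OF deriv] by (intro continuous_intros)
  then have g_cont: "continuous_on {0<..<T} g"
    by (rule continuous_on_eq) (simp add: dissipation g_def)
  have g_nonneg: "0 \<le> g t" if "t \<in> {0<..<T}" for t
    unfolding g_def using G(1)[OF that] by (rule integral_nonneg) (rule G(2))
  have e_nonneg: "0 \<le> e t" if "t \<in> {0<..T}" for t
    unfolding e_def using int_u2[OF that] by (rule integral_nonneg) simp
  have "Limsup (at_right 0) (\<lambda>t. ennreal (e t))
      = Limsup (at_right 0) (\<lambda>t. \<integral>\<^sup>+x\<in>\<Omega>. ennreal ((u x t)^2) \<partial>lborel)"
    using \<open>0 < T\<close> e_eq by (intro Limsup_eq eventually_at_rightI[of 0 T]) auto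
  also have "\<dots> \<le> ennreal e0"
    unfolding u0(2)[symmetric]
    using \<Omega> \<open>0 < T\<close> u0 L2 continuous_on_subset[OF u_slice K(2)]
    by (intro Limsup_nn_set_integral_power2_le eventually_at_rightI[of 0 T]) (auto simp: borel_open)
  finally have bounds: "\<And>t. t \<in> {0<..T} \<Longrightarrow> e t \<le> e0"
      "(\<integral>\<^sup>+t\<in>{0<..<T}. ennreal (g t) \<partial>lborel) \<le> ennreal (e0 / 2)"
    using decreasing_energy_bounds[OF e_deriv g_cont g_nonneg e_cont e_nonneg _ u0(3)] by auto
  show "(\<integral>\<^sup>+x\<in>\<Omega>. ennreal ((u x t)^2) \<partial>lborel) \<le> ennreal e0" if "t \<in> {0<..T}" for t
    using e_eq[OF that] bounds(1)[OF that] by (simp add: ennreal_leI)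
  have "(\<integral>\<^sup>+t\<in>{0<..<T}. (\<integral>\<^sup>+x\<in>\<Omega>. ennreal (G x t) \<partial>lborel) \<partial>lborel)
      = (\<integral>\<^sup>+t\<in>{0<..<T}. ennreal (g t) \<partial>lborel)"
    unfolding g_def using G by (intro set_nn_integral_cong nn_set_integral_eq_integral) auto
  with bounds(2) show "(\<integral>\<^sup>+t\<in>{0<..<T}. (\<integral>\<^sup>+x\<in>\<Omega>. ennreal (G x t) \<partial>lborel) \<partial>lborel) \<le> ennreal (e0 / 2)"
    by simp
qed

lemma energy_inequality:
  fixes u ut G :: "'a::euclidean_space \<Rightarrow> real \<Rightarrow> real" and u0 :: "'a \<Rightarrow> real"
  assumes \<Omega>: "open \<Omega>" "bounded \<Omega>" and "0 < T"
    and u: "continuous_on (closure \<Omega> \<times> {0<..T}) (\<lambda>(x, t). u x t)"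
    and ut: "continuous_on (closure \<Omega> \<times> {0<..<T}) (\<lambda>(x, t). ut x t)"
    and deriv: "\<And>x t. x \<in> closure \<Omega> \<Longrightarrow> t \<in> {0<..<T} \<Longrightarrow> ((\<lambda>s. u x s) has_real_derivative ut x t) (at t)"
    and dissipation: "\<And>t. t \<in> {0<..<T} \<Longrightarrow>
          integral \<Omega> (\<lambda>x. 2 * u x t * ut x t) = - 2 * integral \<Omega> (\<lambda>x. G x t)"
    and G: "\<And>t. t \<in> {0<..<T} \<Longrightarrow> (\<lambda>x. G x t) integrable_on \<Omega>" "\<And>x t. x \<in> \<Omega> \<Longrightarrow> 0 \<le> G x t"
    and initial: "\<And>x. x \<in> \<Omega> \<Longrightarrow> u x 0 = u0 x"
    and L2: "((\<lambda>t. \<integral>\<^sup>+x\<in>\<Omega>. ennreal ((u x t - u0 x)^2) \<partial>lborel) \<longlongrightarrow> 0) (at_right 0)"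
    and u0: "u0 \<in> borel_measurable lborel" "(\<integral>\<^sup>+x\<in>\<Omega>. ennreal ((u0 x)^2) \<partial>lborel) < \<infinity>"
  shows "ennreal (1/2) * (SUP t\<in>{0..T}. \<integral>\<^sup>+x\<in>\<Omega>. ennreal ((u x t)^2) \<partial>lborel)
      + (\<integral>\<^sup>+t\<in>{0<..<T}. (\<integral>\<^sup>+x\<in>\<Omega>. ennreal (G x t) \<partial>lborel) \<partial>lborel)
    \<le> (\<integral>\<^sup>+x\<in>\<Omega>. ennreal ((u0 x)^2) \<partial>lborel)"
proof -
  obtain e0 where e0: "(\<integral>\<^sup>+x\<in>\<Omega>. ennreal ((u0 x)^2) \<partial>lborel) = ennreal e0" "0 \<le> e0"
    using u0(2) by (cases "\<integral>\<^sup>+x\<in>\<Omega>. ennreal ((u0 x)^2) \<partial>lborel") auto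
  note bounds = energy_bounds[OF \<Omega> \<open>0 < T\<close> u ut deriv dissipation G u0(1) e0 L2]
  have "(\<integral>\<^sup>+x\<in>\<Omega>. ennreal ((u x 0)^2) \<partial>lborel) = ennreal e0"
    unfolding e0(1)[symmetric] using initial by (intro set_nn_integral_cong) auto
  then have "(\<integral>\<^sup>+x\<in>\<Omega>. ennreal ((u x t)^2) \<partial>lborel) \<le> ennreal e0" if "t \<in> {0..T}" for t
    using bounds(1)[of t] that by (cases "t = 0") auto
  then have "(SUP t\<in>{0..T}. \<integral>\<^sup>+x\<in>\<Omega>. ennreal ((u x t)^2) \<partial>lborel) \<le> ennreal e0"
    by (rule SUP_least)
  then have "ennreal (1/2) * (SUP t\<in>{0..T}. \<integral>\<^sup>+x\<in>\<Omega>. ennreal ((u x t)^2) \<partial>lborel)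
      + (\<integral>\<^sup>+t\<in>{0<..<T}. (\<integral>\<^sup>+x\<in>\<Omega>. ennreal (G x t) \<partial>lborel) \<partial>lborel)
      \<le> ennreal (1/2) * ennreal e0 + ennreal (e0 / 2)"
    using bounds(2) by (intro add_mono mult_left_mono) auto
  also have "ennreal (1/2) * ennreal e0 = ennreal (e0 / 2)"
    using e0(2) by (subst ennreal_mult[symmetric]) auto
  also have "ennreal (e0 / 2) + ennreal (e0 / 2) = ennreal e0"
    using e0(2) by (subst ennreal_plus[symmetric]) auto
  finally show ?thesis
    using e0(1) by simp
qed

theorem lemma3p1:
  fixes \<Omega> U :: "(real^2) set" and T a b m :: real
    and \<nu> :: "real^2 \<Rightarrow> real^2" and \<sigma> :: "(real^2) measure"
    and u v ut :: "real^2 \<Rightarrow> real \<Rightarrow> real" and u0 :: "real^2 \<Rightarrow> real"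
    and gu gv :: "real^2 \<Rightarrow> real \<Rightarrow> real^2"
    and Hu Hv JW :: "real^2 \<Rightarrow> real \<Rightarrow> real^2^2"
  assumes dom: "open \<Omega>" "connected \<Omega>" "bounded \<Omega>"
    and reg_dom: "divergence_domain \<Omega> \<nu> \<sigma>"
    and params: "T > 0" "a > 0" "b > 0" "m > 0" "b > a"
    and U: "open U" "closure \<Omega> \<subseteq> U"
    \<comment> \<open>regularity of the solution (classical solution, C^2 in space, C^1 in time)\<close>
    and reg_v: "\<And>t. t \<in> {0<..<T} \<Longrightarrow>
                   (\<forall>x\<in>U. ((\<lambda>y. v y t) has_derivative (\<lambda>h. gv x t \<bullet> h)) (at x))
                   \<and> C1_field U (\<lambda>x. gv x t) (\<lambda>x. Hv x t)"
    and reg_u: "\<And>t. t \<in> {0<..<T} \<Longrightarrow>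
                   (\<forall>x\<in>U. ((\<lambda>y. u y t) has_derivative (\<lambda>h. gu x t \<bullet> h)) (at x))
                   \<and> C1_field U (\<lambda>x. gu x t) (\<lambda>x. Hu x t)"
    and reg_flux: "\<And>t. t \<in> {0<..<T} \<Longrightarrow>
                   C1_field U (\<lambda>x. Dmat a b m (qvec (gv x t)) *v gu x t) (\<lambda>x. JW x t)"
    and reg_ut: "\<And>x t. x \<in> U \<Longrightarrow> t \<in> {0<..<T} \<Longrightarrow>
                   ((\<lambda>s. u x s) has_real_derivative ut x t) (at t)"
    and cont: "continuous_on (U \<times> {0<..<T}) (\<lambda>(x, t). ut x t)"
              "continuous_on (U \<times> {0<..<T}) (\<lambda>(x, t). gu x t)"
              "continuous_on (U \<times> {0<..<T}) (\<lambda>(x, t). Hu x t)"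
              "continuous_on (U \<times> {0<..<T}) (\<lambda>(x, t). v x t)"
              "continuous_on (U \<times> {0<..<T}) (\<lambda>(x, t). gv x t)"
              "continuous_on (U \<times> {0<..<T}) (\<lambda>(x, t). Hv x t)"
              "continuous_on (U \<times> {0<..<T}) (\<lambda>(x, t). JW x t)"
              "continuous_on (closure \<Omega> \<times> {0<..T}) (\<lambda>(x, t). u x t)"
    \<comment> \<open>the equations in \<Omega>_T\<close>
    and eq_v: "\<And>x t. x \<in> \<Omega> \<Longrightarrow> t \<in> {0<..<T} \<Longrightarrow> trace (Hv x t) = gu x t $ 1"
    and eq_u: "\<And>x t. x \<in> \<Omega> \<Longrightarrow> t \<in> {0<..<T} \<Longrightarrow>
                 ut x t - trace (JW x t) = - (gu x t \<bullet> qvec (gv x t))"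
    \<comment> \<open>boundary conditions on \<partial>\<Omega> \<times> (0,T)\<close>
    and bc_u: "\<And>x t. x \<in> frontier \<Omega> \<Longrightarrow> t \<in> {0<..<T} \<Longrightarrow>
                 (Dmat a b m (qvec (gv x t)) *v gu x t) \<bullet> \<nu> x = 0"
    and bc_v: "\<And>x t. x \<in> frontier \<Omega> \<Longrightarrow> t \<in> {0<..<T} \<Longrightarrow> v x t = 0"
    \<comment> \<open>initial condition, attained in the L^2 sense\<close>
    and init: "\<And>x. x \<in> \<Omega> \<Longrightarrow> u x 0 = u0 x"
    and init_L2: "((\<lambda>t. \<integral>\<^sup>+x\<in>\<Omega>. ennreal ((u x t - u0 x)^2) \<partial>lborel) \<longlongrightarrow> 0) (at_right 0)"
    and u0_L2: "u0 \<in> borel_measurable lborel" "(\<integral>\<^sup>+x\<in>\<Omega>. ennreal ((u0 x)^2) \<partial>lborel) < \<infinity>"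
  shows "ennreal (1/2) * (SUP t\<in>{0..T}. \<integral>\<^sup>+x\<in>\<Omega>. ennreal ((u x t)^2) \<partial>lborel)
         + (\<integral>\<^sup>+t\<in>{0<..<T}. (\<integral>\<^sup>+x\<in>\<Omega>.
               ennreal ((Dmat a b m (qvec (gv x t)) *v gu x t) \<bullet> gu x t) \<partial>lborel) \<partial>lborel)
         \<le> (\<integral>\<^sup>+x\<in>\<Omega>. ennreal ((u0 x)^2) \<partial>lborel)"
proof -
  define W where "W x t = Dmat a b m (qvec (gv x t)) *v gu x t" for x t
  have cut: "continuous_on (closure \<Omega> \<times> {0<..<T}) (\<lambda>(x, t). ut x t)"
    using U(2) by (intro continuous_on_subset[OF cont(1)]) auto
  have "ennreal (1/2) * (SUP t\<in>{0..T}. \<integral>\<^sup>+x\<in>\<Omega>. ennreal ((u x t)^2) \<partial>lborel)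
      + (\<integral>\<^sup>+t\<in>{0<..<T}. (\<integral>\<^sup>+x\<in>\<Omega>. ennreal (W x t \<bullet> gu x t) \<partial>lborel) \<partial>lborel)
    \<le> (\<integral>\<^sup>+x\<in>\<Omega>. ennreal ((u0 x)^2) \<partial>lborel)"
  proof (rule energy_inequality[OF dom(1,3) params(1) cont(8) cut _ _ _ _ init init_L2 u0_L2])
    show "((\<lambda>s. u x s) has_real_derivative ut x t) (at t)" if "x \<in> closure \<Omega>" "t \<in> {0<..<T}" for x t
      using reg_ut U(2) that by auto
    show "integral \<Omega> (\<lambda>x. 2 * u x t * ut x t) = - 2 * integral \<Omega> (\<lambda>x. W x t \<bullet> gu x t)"
      if t: "t \<in> {0<..<T}" for t
      using reg_u[OF t] reg_v[OF t] reg_flux[OF t] bc_u[OF _ t] bc_v[OF _ t] eq_u[OF _ t]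
      by (intro energy_identity[OF dom(1,3) reg_dom U, where u="\<lambda>x. u x t" and v="\<lambda>x. v x t"
            and Hu="\<lambda>x. Hu x t" and J="\<lambda>x. JW x t"])
        (auto simp: W_def intro: C1_field_imp_continuous_on)
    show "(\<lambda>x. W x t \<bullet> gu x t) integrable_on \<Omega>" if t: "t \<in> {0<..<T}" for t
      using reg_flux[OF t] reg_u[OF t] U(2) unfolding W_def
      by (intro continuous_on_closure_imp_integrable_on dom continuous_intros)
        (auto intro: continuous_on_subset C1_field_imp_continuous_on)
    show "0 \<le> W x t \<bullet> gu x t" for x t
      using params by (simp add: W_def Dmat_mult_vec_inner_nonneg)
  qed
  then show ?thesis by (simp add: W_def)
qed

end
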